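(* For every integer $d\ge2$ with $d \notin \{2\} \cup 4\mathbb N$, we have $J_d/d \in \mathsf O_{d,2} \setminus \mathsf O_{d,1}$, where $J_d$ is the $d\times d$ all-ones matrix.
   Context: For integers $d\ge2$, $s\ge1$ and $U\in M_{ds}(\mathbb C)$ viewed as a $d\times d$ block matrix with blocks $U_{ij}\in M_s(\mathbb C)$, set $\phi_{d,s}(U)=\big(\tfrac1s\|U_{ij}\|_F^2\big)_{i,j=1}^d$ with $\|X\|_F=\operatorname{Tr}(XX^* )^{1/2}$. Define $\mathsf O_{d,s}:=\phi_{d,s}(\mathcal O(ds))$, where $\mathcal O(n)$ is the group of $n\times n$ real orthogonal matrices. $4\mathbb N$ denotes the positive multiples of $4$. *)

theory Defs
  imports Main Complex_Main
begin

text \<open>Matrices of size varying with a natural number are represented as functions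
  nat \<Rightarrow> nat \<Rightarrow> real, indices 0-based; only entries with indices below the size matter.
  A d\<times>d matrix is normalized to be 0 outside its index range.\<close>

definition real_orthogonal :: "nat \<Rightarrow> (nat \<Rightarrow> nat \<Rightarrow> real) \<Rightarrow> bool" where
  "real_orthogonal n U \<longleftrightarrow>
     (\<forall>i<n. \<forall>j<n. (\<Sum>k<n. U i k * U j k) = (if i = j then 1 else 0))"

definition phi :: "nat \<Rightarrow> nat \<Rightarrow> (nat \<Rightarrow> nat \<Rightarrow> real) \<Rightarrow> (nat \<Rightarrow> nat \<Rightarrow> real)" where
  "phi d s U = (\<lambda>i j. if i < d \<and> j < d then
      (1 / real s) * (\<Sum>a<s. \<Sum>b<s. (U (i * s + a) (j * s + b))^2) else 0)"

definition O_set :: "nat \<Rightarrow> nat \<Rightarrow> (nat \<Rightarrow> nat \<Rightarrow> real) set" where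
  "O_set d s = phi d s ` {U. real_orthogonal (d * s) U}"

definition all_ones_over_d :: "nat \<Rightarrow> (nat \<Rightarrow> nat \<Rightarrow> real)" where
  "all_ones_over_d d = (\<lambda>i j. if i < d \<and> j < d then 1 / real d else 0)"

end

theory Submission
  imports Defs "HOL-Library.Real_Mod"
begin

text \<open>Replacing every entry z of the unitary Fourier matrix (\<omega>^(ij) / sqrt d) by the
  2\<times>2 real matrix of multiplication by z turns it into a real orthogonal matrix of size 2d,
  because this representation of \<complex> is a ring homomorphism taking cnj to transposition.
  Each 2\<times>2 block then has squared Frobenius norm 2 |z|^2 = 2/d, so J_d/d lies in O_{d,2}.
  On the other hand, U in O(d) with phi_{d,1}(U) = J_d/d is a rescaled real Hadamard
  matrix. Normalising its first three rows by the first gives \<plusminus>1 vectors x, y that sum to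
  0 and are orthogonal; then \<Sum>(1 + x_k)(1 + y_k) = d, while each term is 0 or 4,
  so 4 divides d whenever d \<ge> 3.\<close>

lemma sum_cis_roots_of_unity:
  fixes m :: int
  assumes "\<not> int d dvd m"
  shows "(\<Sum>j<d. cis (2 * pi * m * real j / d)) = 0"
proof (cases "d = 0")
  case False
  define w where "w = cis (2 * pi * m / d)"
  have pow: "w ^ j = cis (2 * pi * m * real j / d)" for j
    by (simp add: w_def DeMoivre mult_ac)
  have "w \<noteq> 1"
  proof
    assume "w = 1"
    then obtain n :: int where "2 * pi * m / d = n * (2 * pi)"
      by (auto simp: w_def cis_eq_1_iff)
    then have "real_of_int m = of_int (n * int d)" using False by (simp add: field_simps)
    then have "m = n * int d" by (simp only: of_int_eq_iff)
    with assms show False by simp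
  qed
  moreover have "w ^ d = 1" using False by (simp add: pow)
  ultimately show ?thesis by (simp add: sum_gp_strict flip: pow)
qed simp

lemma sum_lessThan_mult_group:
  fixes g :: "nat \<Rightarrow> 'a :: comm_monoid_add"
  shows "(\<Sum>l<n * k. g l) = (\<Sum>j<n. \<Sum>b<k. g (j * k + b))"
  by (simp flip: sum.nat_group
      add: sum.shift_bounds_nat_ivl[of _ 0, simplified] atLeast0LessThan add.commute)

definition unitary :: "nat \<Rightarrow> (nat \<Rightarrow> nat \<Rightarrow> complex) \<Rightarrow> bool" where
  "unitary n F \<longleftrightarrow>
     (\<forall>i<n. \<forall>j<n. (\<Sum>k<n. F i k * cnj (F j k)) = (if i = j then 1 else 0))"

definition fourier_matrix :: "nat \<Rightarrow> nat \<Rightarrow> nat \<Rightarrow> complex" where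
  "fourier_matrix d i j = cis (2 * pi * real i * real j / d) / sqrt d"

lemma norm_fourier_matrix: "norm (fourier_matrix d i j) = 1 / sqrt d"
  by (simp add: fourier_matrix_def norm_divide)

lemma unitary_fourier_matrix: "unitary d (fourier_matrix d)"
  unfolding unitary_def
proof (intro allI impI)
  fix i j assume ij: "i < d" "j < d"
  have sqrt_sq: "complex_of_real (sqrt d) * complex_of_real (sqrt d) = d"
    by (simp flip: of_real_mult)
  have "fourier_matrix d i k * cnj (fourier_matrix d j k) =
          cis (2 * pi * (int i - int j) * real k / d) / d" for k
    by (simp add: fourier_matrix_def cis_cnj cis_mult diff_divide_distrib algebra_simps sqrt_sq)
  then have "(\<Sum>k<d. fourier_matrix d i k * cnj (fourier_matrix d j k)) =
               (\<Sum>k<d. cis (2 * pi * (int i - int j) * real k / d)) / d"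
    by (simp add: sum_divide_distrib)
  also have "\<dots> = (if i = j then 1 else 0)"
  proof (cases "i = j")
    case False
    with ij have "\<not> int d dvd int i - int j"
      using dvd_imp_le_int[of "int i - int j" "int d"] by auto
    then show ?thesis using False sum_cis_roots_of_unity[of d "int i - int j"] by simp
  qed (use ij in simp)
  finally show "(\<Sum>k<d. fourier_matrix d i k * cnj (fourier_matrix d j k)) =
                  (if i = j then 1 else 0)" .
qed

text \<open>The matrix of multiplication by z on \<complex> = \<real>^2 in the basis 1, \<i>.\<close>

definition real_rep :: "complex \<Rightarrow> nat \<Rightarrow> nat \<Rightarrow> real" where
  "real_rep z a b = (if a = b then Re z else if a = 0 then - Im z else Im z)"

lemma real_rep_mult_cnj:
  assumes "a < 2" "a' < 2"
  shows "(\<Sum>b<2. real_rep z a b * real_rep w a' b) = real_rep (z * cnj w) a a'"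
proof -
  have "a = 0 \<or> a = 1" "a' = 0 \<or> a' = 1" using assms by auto
  then show ?thesis by (auto simp: real_rep_def numeral_2_eq_2 algebra_simps)
qed

lemma real_rep_sum: "real_rep (\<Sum>k\<in>A. f k) a b = (\<Sum>k\<in>A. real_rep (f k) a b)"
  by (simp add: real_rep_def Re_sum Im_sum sum_negf)

lemma real_rep_of_bool: "real_rep (if P then 1 else 0) a b = (if P \<and> a = b then 1 else 0)"
  by (simp add: real_rep_def)

lemma sum_real_rep_squared: "(\<Sum>a<2. \<Sum>b<2. (real_rep z a b)\<^sup>2) = 2 * (norm z)\<^sup>2"
  unfolding cmod_power2 by (simp add: real_rep_def numeral_2_eq_2)

definition realify :: "(nat \<Rightarrow> nat \<Rightarrow> complex) \<Rightarrow> nat \<Rightarrow> nat \<Rightarrow> real" where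
  "realify F k l = real_rep (F (k div 2) (l div 2)) (k mod 2) (l mod 2)"

lemma realify_block:
  "a < 2 \<Longrightarrow> b < 2 \<Longrightarrow> realify F (i * 2 + a) (j * 2 + b) = real_rep (F i j) a b"
  by (simp add: realify_def)

lemma real_orthogonal_realify:
  assumes "unitary n F"
  shows "real_orthogonal (n * 2) (realify F)"
  unfolding real_orthogonal_def
proof (intro allI impI)
  fix k k' assume "k < n * 2" "k' < n * 2"
  then obtain i a i' a' where
    k: "k = i * 2 + a" "k' = i' * 2 + a'" "a < 2" "a' < 2" "i < n" "i' < n"
    by (metis div_mult_mod_eq less_mult_imp_div_less mod_less_divisor zero_less_numeral)
  have "(\<Sum>l<n * 2. realify F k l * realify F k' l) =
          (\<Sum>j<n. \<Sum>b<2. real_rep (F i j) a b * real_rep (F i' j) a' b)"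
    by (simp add: sum_lessThan_mult_group k realify_block)
  also have "\<dots> = real_rep (\<Sum>j<n. F i j * cnj (F i' j)) a a'"
    by (simp add: real_rep_mult_cnj k real_rep_sum)
  also have "\<dots> = (if k = k' then 1 else 0)"
  proof -
    have "k = k' \<longleftrightarrow> i = i' \<and> a = a'" using k(1-4) by presburger
    then show ?thesis using assms k(5,6) by (simp add: unitary_def real_rep_of_bool)
  qed
  finally show "(\<Sum>l<n * 2. realify F k l * realify F k' l) = (if k = k' then 1 else 0)" .
qed

lemma phi_realify:
  assumes "i < d" "j < d"
  shows "phi d 2 (realify F) i j = (norm (F i j))\<^sup>2"
  using assms by (simp add: phi_def realify_block sum_real_rep_squared)

lemma all_ones_over_d_in_O_set_2:
  assumes "d > 0"
  shows "all_ones_over_d d \<in> O_set d 2"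
proof -
  have "phi d 2 (realify (fourier_matrix d)) i j = all_ones_over_d d i j" for i j
  proof (cases "i < d \<and> j < d")
    case True
    then show ?thesis
      using assms by (simp add: phi_realify norm_fourier_matrix power_divide all_ones_over_d_def)
  qed (auto simp: phi_def all_ones_over_d_def)
  then have "phi d 2 (realify (fourier_matrix d)) = all_ones_over_d d" by blast
  moreover have "real_orthogonal (d * 2) (realify (fourier_matrix d))"
    by (rule real_orthogonal_realify[OF unitary_fourier_matrix])
  ultimately show ?thesis
    unfolding O_set_def by (intro image_eqI[of _ _ "realify (fourier_matrix d)"]) auto
qed

lemma four_dvd_of_orthogonal_sign_vectors:
  fixes x y :: "nat \<Rightarrow> real"
  assumes signs: "\<And>k. k < n \<Longrightarrow> x k \<in> {-1, 1} \<and> y k \<in> {-1, 1}"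
    and "(\<Sum>k<n. x k) = 0" "(\<Sum>k<n. y k) = 0" "(\<Sum>k<n. x k * y k) = 0"
  shows "4 dvd n"
proof -
  have "real n = (\<Sum>k<n. (1 + x k) * (1 + y k))"
    using assms(2-4) by (simp add: algebra_simps sum.distrib)
  also have "\<dots> = (\<Sum>k<n. if x k = 1 \<and> y k = 1 then 4 else 0)"
    by (intro sum.cong refl) (auto dest!: signs)
  also have "\<dots> = real (card {k\<in>{..<n}. x k = 1 \<and> y k = 1} * 4)"
    by (simp flip: sum.inter_filter)
  finally show ?thesis by (metis dvd_triv_right of_nat_eq_iff)
qed

lemma four_dvd_order_of_hadamard:
  assumes "3 \<le> n" and orth: "real_orthogonal n U"
    and entries: "\<And>i j. i < n \<Longrightarrow> j < n \<Longrightarrow> (U i j)\<^sup>2 = 1 / n"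
  shows "4 dvd n"
proof (rule four_dvd_of_orthogonal_sign_vectors)
  define x where "x k = n * U 0 k * U 1 k" for k
  define y where "y k = n * U 0 k * U 2 k" for k
  have rows: "(\<Sum>k<n. U i k * U j k) = 0" if "i < j" "j < 3" for i j
    using orth that \<open>3 \<le> n\<close> by (simp add: real_orthogonal_def)
  show "x k \<in> {-1, 1} \<and> y k \<in> {-1, 1}" if "k < n" for k
  proof -
    have "(x k)\<^sup>2 = n\<^sup>2 * (U 0 k)\<^sup>2 * (U 1 k)\<^sup>2" "(y k)\<^sup>2 = n\<^sup>2 * (U 0 k)\<^sup>2 * (U 2 k)\<^sup>2"
      by (simp_all add: x_def y_def power_mult_distrib)
    then have "(x k)\<^sup>2 = 1" "(y k)\<^sup>2 = 1"
      using entries[of 0 k] entries[of 1 k] entries[of 2 k] that \<open>3 \<le> n\<close>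
      by (simp_all add: power2_eq_square)
    then show ?thesis by (auto simp: power2_eq_1_iff)
  qed
  show "(\<Sum>k<n. x k) = 0" "(\<Sum>k<n. y k) = 0"
    using rows[of 0 1] rows[of 0 2] by (simp_all add: x_def y_def mult.assoc flip: sum_distrib_left)
  have "x k * y k = n * (U 1 k * U 2 k)" if "k < n" for k
    using entries[of 0 k] that \<open>3 \<le> n\<close> by (simp add: x_def y_def power2_eq_square field_simps)
  then show "(\<Sum>k<n. x k * y k) = 0"
    using rows[of 1 2] by (simp flip: sum_distrib_left)
qed

lemma all_ones_over_d_notin_O_set_1:
  assumes "3 \<le> d" "\<not> 4 dvd d"
  shows "all_ones_over_d d \<notin> O_set d 1"
proof
  assume "all_ones_over_d d \<in> O_set d 1"
  then obtain U where U: "real_orthogonal d U" and eq: "all_ones_over_d d = phi d 1 U"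
    by (auto simp: O_set_def)
  have "(U i j)\<^sup>2 = 1 / d" if "i < d" "j < d" for i j
    using fun_cong[OF fun_cong[OF eq, of i], of j] that by (simp add: phi_def all_ones_over_d_def)
  then have "4 dvd d" using four_dvd_order_of_hadamard[OF assms(1) U] by blast
  with assms show False by blast
qed

theorem corollary4p3:
  fixes d :: nat
  assumes "d \<ge> 2" and "d \<noteq> 2" and "\<not> (4 dvd d)"
  shows "all_ones_over_d d \<in> O_set d 2 - O_set d 1"
  using assms all_ones_over_d_in_O_set_2 all_ones_over_d_notin_O_set_1 by simp

end
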